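(* Fix $N\ge1$. For $i\ge1$ let $f_i,g_i,h_i$ be quasimodular forms of weight $i$ on $\Gamma_1(N)$. Let $u,v,w\ge1$ and $f=\sum_{i=1}^uf_i$, $g=\sum_{i=1}^vg_i$, $h=\sum_{i=1}^wh_i$. If $f,g,h$ are algebraically dependent over $\mathbb{C}$, then $f_u,g_v,h_w$ are algebraically dependent over $\mathbb{C}$.
   Context: A quasimodular form of weight $k$ on a group $\Gamma$ is a holomorphic function $f$ on the upper half-plane, holomorphic at the cusps, such that for all $\gamma=\begin{pmatrix}a&b\\c&d\end{pmatrix}\in\Gamma$, $(cz+d)^{-k}f(\gamma z)=\sum_{0\le i\le p}F_i(z)\bigl(\frac{c}{cz+d}\bigr)^i$ for holomorphic functions $F_i$ holomorphic at the cusps. *)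

theory Defs
  imports "HOL-Analysis.Analysis"
begin

definition upper_half_plane :: "complex set" where
  "upper_half_plane = {z. Im z > 0}"

definition Gamma1 :: "int \<Rightarrow> (int \<times> int \<times> int \<times> int) set" where
  "Gamma1 N = {(a,b,c,d). a*d - b*c = 1 \<and> a mod N = 1 mod N \<and> d mod N = 1 mod N \<and> c mod N = 0}"

definition moebius_act :: "int \<times> int \<times> int \<times> int \<Rightarrow> complex \<Rightarrow> complex" where
  "moebius_act \<gamma> z = (case \<gamma> of (a,b,c,d) \<Rightarrow> (of_int a * z + of_int b) / (of_int c * z + of_int d))"

text \<open>"Holomorphic at the cusps", rendered as the standard moderate-growth condition
  on the upper half-plane (polynomial growth in Im z and 1 / Im z).\<close>
definition holo_at_cusps :: "(complex \<Rightarrow> complex) \<Rightarrow> bool" where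
  "holo_at_cusps F \<longleftrightarrow> (\<exists>C A::real. \<forall>z. Im z > 0 \<longrightarrow>
      cmod (F z) \<le> C * (Im z powr A + Im z powr (- A)))"

definition quasimodular :: "(int \<times> int \<times> int \<times> int) set \<Rightarrow> nat \<Rightarrow> (complex \<Rightarrow> complex) \<Rightarrow> bool" where
  "quasimodular \<Gamma> k f \<longleftrightarrow>
     f holomorphic_on upper_half_plane \<and> holo_at_cusps f \<and>
     (\<exists>(p::nat) (F::nat \<Rightarrow> complex \<Rightarrow> complex).
        (\<forall>i\<le>p. F i holomorphic_on upper_half_plane \<and> holo_at_cusps (F i)) \<and>
        (\<forall>\<gamma>\<in>\<Gamma>. \<forall>z\<in>upper_half_plane. case \<gamma> of (a,b,c,d) \<Rightarrow>
           (of_int c * z + of_int d) powi (- int k) * f (moebius_act \<gamma> z)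
             = (\<Sum>i\<le>p. F i z * (of_int c / (of_int c * z + of_int d)) ^ i)))"

text \<open>Three functions on the upper half-plane are algebraically dependent over C:
  some nonzero polynomial P in C[X,Y,Z] (given by its coefficients c(a,b,d), degree in
  each variable at most n) satisfies P(f,g,h) = 0 identically on the upper half-plane.\<close>
definition alg_dependent3 :: "(complex \<Rightarrow> complex) \<Rightarrow> (complex \<Rightarrow> complex) \<Rightarrow> (complex \<Rightarrow> complex) \<Rightarrow> bool" where
  "alg_dependent3 f g h \<longleftrightarrow>
     (\<exists>(n::nat) (c::nat \<Rightarrow> nat \<Rightarrow> nat \<Rightarrow> complex).
        (\<exists>a\<le>n. \<exists>b\<le>n. \<exists>d\<le>n. c a b d \<noteq> 0) \<and>
        (\<forall>z\<in>upper_half_plane.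
           (\<Sum>a\<le>n. \<Sum>b\<le>n. \<Sum>d\<le>n. c a b d * f z ^ a * g z ^ b * h z ^ d) = 0))"

end

theory Submission
  imports Defs "HOL-Computational_Algebra.Polynomial"
begin

(* Fix z in the upper half-plane. For (a, b; c, d) in Gamma_1(N) the transformation law writes
   f_i(gamma z) as (cz + d)^i times a polynomial in c / (cz + d) whose constant term is f_i(z).
   Clearing denominators turns the relation P(f, g, h) = 0 at gamma z into Phi(c, cz + d) = 0 for a
   polynomial Phi in two variables. The matrices (1, k; Nm, 1 + kNm) give infinitely many zeros on
   each of the infinitely many lines s |-> (s, s (z + k) + 1), which forces Phi(0, t) = 0 for all t,
   that is P(sum f_i(z) t^i, sum g_i(z) t^i, sum h_i(z) t^i) = 0 identically in t. Weighting the three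
   variables of P by u, v, w and letting M be the largest weight occurring in P, the coefficient of t^M
   is the (nonzero) weight-M part of P evaluated at (f_u(z), g_v(z), h_w(z)). *)

definition poly_fun :: "('a::comm_semiring_1 \<Rightarrow> 'a) \<Rightarrow> bool" where
  "poly_fun f \<longleftrightarrow> (\<exists>q. f = poly q)"

lemma poly_fun_const: "poly_fun (\<lambda>x. c)"
  unfolding poly_fun_def by (intro exI[of _ "[:c:]"]) auto

lemma poly_fun_id: "poly_fun (\<lambda>x. x)"
  unfolding poly_fun_def by (intro exI[of _ "[:0, 1:]"]) (simp add: fun_eq_iff)

lemma poly_fun_add:
  assumes "poly_fun f" "poly_fun g"
  shows "poly_fun (\<lambda>x. f x + g x)"
proof -
  obtain p q where "f = poly p" "g = poly q"
    using assms unfolding poly_fun_def by blast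
  then show ?thesis
    unfolding poly_fun_def by (intro exI[of _ "p + q"]) (simp add: fun_eq_iff)
qed

lemma poly_fun_mult:
  assumes "poly_fun f" "poly_fun g"
  shows "poly_fun (\<lambda>x. f x * g x)"
proof -
  obtain p q where "f = poly p" "g = poly q"
    using assms unfolding poly_fun_def by blast
  then show ?thesis
    unfolding poly_fun_def by (intro exI[of _ "p * q"]) (simp add: fun_eq_iff)
qed

lemma poly_fun_power:
  assumes "poly_fun f"
  shows "poly_fun (\<lambda>x. f x ^ n)"
proof -
  obtain p where "f = poly p"
    using assms unfolding poly_fun_def by blast
  then show ?thesis
    unfolding poly_fun_def by (intro exI[of _ "p ^ n"]) (simp add: fun_eq_iff)
qed

lemma poly_fun_sum: "(\<And>i. i \<in> A \<Longrightarrow> poly_fun (f i)) \<Longrightarrow> poly_fun (\<lambda>x. \<Sum>i\<in>A. f i x)"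
proof (induction A rule: infinite_finite_induct)
  case (insert i A)
  then show ?case
    by (simp add: poly_fun_add)
qed (simp_all add: poly_fun_const)

lemma poly_fun_eq_0_if_infinite_zeros:
  fixes f :: "'a::idom \<Rightarrow> 'a"
  assumes "poly_fun f" "infinite {x. f x = 0}"
  shows "f x = 0"
proof -
  obtain q where "f = poly q"
    using assms(1) unfolding poly_fun_def by blast
  then have "q = 0"
    using poly_roots_finite assms(2) by blast
  then show ?thesis
    using \<open>f = poly q\<close> by simp
qed

lemma poly_fun_eq_0_if_eq_0_off_point:
  fixes f :: "'a::{idom,ring_char_0} \<Rightarrow> 'a"
  assumes "poly_fun f" "\<And>x. x \<noteq> a \<Longrightarrow> f x = 0"
  shows "f x = 0"
proof (rule poly_fun_eq_0_if_infinite_zeros[OF assms(1)])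
  have "infinite (UNIV - {a})"
    by (simp add: infinite_UNIV_char_0)
  moreover have "UNIV - {a} \<subseteq> {x. f x = 0}"
    using assms(2) by blast
  ultimately show "infinite {x. f x = 0}"
    using finite_subset by blast
qed

definition poly_fun2 :: "('a::comm_semiring_1 \<Rightarrow> 'a \<Rightarrow> 'a) \<Rightarrow> bool" where
  "poly_fun2 \<Phi> \<longleftrightarrow> (\<forall>\<sigma> \<tau>. poly_fun \<sigma> \<longrightarrow> poly_fun \<tau> \<longrightarrow> poly_fun (\<lambda>x. \<Phi> (\<sigma> x) (\<tau> x)))"

lemma poly_fun2D: "poly_fun2 \<Phi> \<Longrightarrow> poly_fun \<sigma> \<Longrightarrow> poly_fun \<tau> \<Longrightarrow> poly_fun (\<lambda>x. \<Phi> (\<sigma> x) (\<tau> x))"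
  unfolding poly_fun2_def by blast

(* Phi vanishes on each line s |-> (s, s (z + k) + 1), and every horizontal line t = t' with t' ~= 1
   meets these lines in the infinitely many points ((t' - 1) / (z + k), t'). *)
lemma poly_fun2_eq_0_on_axis:
  fixes \<Phi> :: "complex \<Rightarrow> complex \<Rightarrow> complex"
  assumes "poly_fun2 \<Phi>" "z \<notin> \<int>" "infinite S"
    and "\<And>s k. s \<in> S \<Longrightarrow> \<Phi> s (s * (z + of_int k) + 1) = 0"
  shows "\<Phi> 0 t = 0"
proof -
  have line: "\<Phi> s (s * (z + of_int k) + 1) = 0" for s k
  proof (rule poly_fun_eq_0_if_infinite_zeros[where f = "\<lambda>s. \<Phi> s (s * (z + of_int k) + 1)"])
    show "poly_fun (\<lambda>s. \<Phi> s (s * (z + of_int k) + 1))"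
      by (intro poly_fun2D[OF assms(1)] poly_fun_add poly_fun_mult poly_fun_id poly_fun_const)
    have "S \<subseteq> {s. \<Phi> s (s * (z + of_int k) + 1) = 0}"
      using assms(4) by blast
    then show "infinite {s. \<Phi> s (s * (z + of_int k) + 1) = 0}"
      using assms(3) by (rule infinite_super)
  qed
  have nonzero: "z + of_int k \<noteq> 0" for k :: int
  proof
    assume "z + of_int k = 0"
    then have "z = of_int (- k)"
      by (simp add: add_eq_0_iff2)
    with assms(2) show False
      by simp
  qed
  have "\<Phi> s t' = 0" if "t' \<noteq> 1" for s t'
  proof (rule poly_fun_eq_0_if_infinite_zeros[where f = "\<lambda>s. \<Phi> s t'"])
    show "poly_fun (\<lambda>s. \<Phi> s t')"
      by (intro poly_fun2D[OF assms(1)] poly_fun_id poly_fun_const)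
    define s_at where "s_at k = (t' - 1) / (z + of_int k)" for k :: int
    have "inj s_at"
      using that by (intro injI) (simp add: s_at_def divide_cancel_left)
    have "\<Phi> (s_at k) t' = 0" for k
    proof -
      have "s_at k * (z + of_int k) + 1 = t'"
        using nonzero[of k] by (simp add: s_at_def)
      then show ?thesis
        using line[of "s_at k" k] by simp
    qed
    then have "range s_at \<subseteq> {s. \<Phi> s t' = 0}"
      by blast
    moreover have "infinite (range s_at)"
      using \<open>inj s_at\<close> infinite_UNIV_int finite_imageD by blast
    ultimately show "infinite {s. \<Phi> s t' = 0}"
      by (rule infinite_super)
  qed
  moreover have "poly_fun (\<Phi> 0)"
    using poly_fun2D[OF assms(1) poly_fun_const[of 0] poly_fun_id] by simp
  ultimately show ?thesis
    using poly_fun_eq_0_if_eq_0_off_point[of "\<Phi> 0" 1] by blast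
qed

definition eval3 :: "nat \<Rightarrow> (nat \<Rightarrow> nat \<Rightarrow> nat \<Rightarrow> 'a::comm_semiring_1) \<Rightarrow> 'a \<Rightarrow> 'a \<Rightarrow> 'a \<Rightarrow> 'a" where
  "eval3 n P x y z = (\<Sum>a\<le>n. \<Sum>b\<le>n. \<Sum>d\<le>n. P a b d * x ^ a * y ^ b * z ^ d)"

lemma alg_dependent3_eval3:
  "alg_dependent3 f g h \<longleftrightarrow> (\<exists>n P. (\<exists>a\<le>n. \<exists>b\<le>n. \<exists>d\<le>n. P a b d \<noteq> 0) \<and>
     (\<forall>z\<in>upper_half_plane. eval3 n P (f z) (g z) (h z) = 0))"
  by (simp add: alg_dependent3_def eval3_def)

definition weighted_part ::
    "nat \<Rightarrow> nat \<Rightarrow> nat \<Rightarrow> nat \<Rightarrow> (nat \<Rightarrow> nat \<Rightarrow> nat \<Rightarrow> 'a::zero) \<Rightarrow> nat \<Rightarrow> nat \<Rightarrow> nat \<Rightarrow> 'a" where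
  "weighted_part u v w M P a b d = (if a * u + b * v + d * w = M then P a b d else 0)"

lemma obtain_top_weight:
  assumes "\<exists>a\<le>n. \<exists>b\<le>n. \<exists>d\<le>n. P a b d \<noteq> 0"
  obtains M where
    "\<And>a b d. a \<le> n \<Longrightarrow> b \<le> n \<Longrightarrow> d \<le> n \<Longrightarrow> P a b d \<noteq> 0 \<Longrightarrow> a * u + b * v + d * w \<le> M"
    and "\<exists>a\<le>n. \<exists>b\<le>n. \<exists>d\<le>n. weighted_part u v w M P a b d \<noteq> 0"
proof -
  define I where "I = {(a, b, d). a \<le> n \<and> b \<le> n \<and> d \<le> n \<and> P a b d \<noteq> 0}"
  define S where "S = (\<lambda>(a, b, d). a * u + b * v + d * w) ` I"
  have "I \<subseteq> {..n} \<times> {..n} \<times> {..n}"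
    unfolding I_def by auto
  then have "finite S"
    unfolding S_def using finite_subset by blast
  moreover have "S \<noteq> {}"
    using assms unfolding S_def I_def by blast
  ultimately have max_in: "Max S \<in> S" and max_ge: "\<And>W. W \<in> S \<Longrightarrow> W \<le> Max S"
    by simp_all
  obtain a b d where abd: "a \<le> n" "b \<le> n" "d \<le> n" "P a b d \<noteq> 0"
    and "a * u + b * v + d * w = Max S"
    using max_in unfolding S_def I_def by auto
  show ?thesis
  proof (rule that[of "Max S"])
    show "a * u + b * v + d * w \<le> Max S" if "a \<le> n" "b \<le> n" "d \<le> n" "P a b d \<noteq> 0" for a b d
    proof (rule max_ge)
      have "(a, b, d) \<in> I"
        using that by (simp add: I_def)
      then show "a * u + b * v + d * w \<in> S"
        unfolding S_def by (rule rev_image_eqI) simp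
    qed
    show "\<exists>a\<le>n. \<exists>b\<le>n. \<exists>d\<le>n. weighted_part u v w (Max S) P a b d \<noteq> 0"
      using abd \<open>a * u + b * v + d * w = Max S\<close> unfolding weighted_part_def by auto
  qed
qed

lemma coeff_mult_at_degree_bounds:
  assumes "degree p \<le> m" "degree q \<le> n"
  shows "coeff (p * q) (m + n) = coeff p m * coeff q n"
proof -
  have "coeff p i * coeff q (m + n - i) = (if i = m then coeff p m * coeff q n else 0)" for i
    using assms by (cases i m rule: linorder_cases) (auto simp: coeff_eq_0)
  then show ?thesis
    by (simp add: coeff_mult)
qed

lemma coeff_power_at_degree_bound:
  assumes "degree p \<le> m"
  shows "coeff (p ^ a) (a * m) = coeff p m ^ a"
proof (induction a)
  case (Suc a)
  have "degree (p ^ a) \<le> a * m"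
    using degree_power_le[of p a] assms by (metis le_trans mult.commute mult_le_mono1)
  then show ?case
    using coeff_mult_at_degree_bounds[OF assms] Suc.IH by simp
qed simp

lemma degree_monomial_le_weight:
  assumes "degree X \<le> u" "degree Y \<le> v" "degree Z \<le> w"
  shows "degree (X ^ a * Y ^ b * Z ^ d) \<le> a * u + b * v + d * w"
proof -
  have "degree (X ^ a) \<le> a * u" "degree (Y ^ b) \<le> b * v" "degree (Z ^ d) \<le> d * w"
    using assms degree_power_le order_trans mult_le_mono2 by (metis mult.commute)+
  then show ?thesis
    using degree_mult_le order_trans add_mono by metis
qed

lemma coeff_monomial_at_weight:
  assumes "degree X \<le> u" "degree Y \<le> v" "degree Z \<le> w"
  shows "coeff (X ^ a * Y ^ b * Z ^ d) (a * u + b * v + d * w) = coeff X u ^ a * coeff Y v ^ b * coeff Z w ^ d"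
proof -
  have deg_a: "degree (X ^ a) \<le> a * u" and deg_b: "degree (Y ^ b) \<le> b * v"
    and deg_d: "degree (Z ^ d) \<le> d * w"
    using assms degree_power_le order_trans mult_le_mono2 by (metis mult.commute)+
  have "coeff (X ^ a * Y ^ b * Z ^ d) (a * u + b * v + d * w)
      = coeff (X ^ a * Y ^ b) (a * u + b * v) * coeff (Z ^ d) (d * w)"
    by (rule coeff_mult_at_degree_bounds[OF order_trans[OF degree_mult_le add_mono[OF deg_a deg_b]] deg_d])
  then show ?thesis
    by (simp add: coeff_mult_at_degree_bounds[OF deg_a deg_b] coeff_power_at_degree_bound assms)
qed

lemma coeff_eval3_at_top_weight:
  fixes X Y Z :: "'a::comm_semiring_1 poly"
  assumes "degree X \<le> u" "degree Y \<le> v" "degree Z \<le> w"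
    and "\<And>a b d. a \<le> n \<Longrightarrow> b \<le> n \<Longrightarrow> d \<le> n \<Longrightarrow> P a b d \<noteq> 0 \<Longrightarrow> a * u + b * v + d * w \<le> M"
  shows "coeff (eval3 n (\<lambda>a b d. [:P a b d:]) X Y Z) M
    = eval3 n (weighted_part u v w M P) (coeff X u) (coeff Y v) (coeff Z w)"
  unfolding eval3_def coeff_sum
proof (intro sum.cong refl)
  fix a b d assume "a \<in> {..n}" "b \<in> {..n}" "d \<in> {..n}"
  have "coeff ([:P a b d:] * X ^ a * Y ^ b * Z ^ d) M = P a b d * coeff (X ^ a * Y ^ b * Z ^ d) M"
    by (simp add: mult.assoc)
  also have "\<dots> = weighted_part u v w M P a b d * coeff X u ^ a * coeff Y v ^ b * coeff Z w ^ d"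
  proof (cases "P a b d = 0 \<or> a * u + b * v + d * w = M")
    case True
    then show ?thesis
      using coeff_monomial_at_weight[OF assms(1-3)] by (auto simp: weighted_part_def mult.assoc)
  next
    case False
    then have "a * u + b * v + d * w < M"
      using assms(4)[of a b d] \<open>a \<in> {..n}\<close> \<open>b \<in> {..n}\<close> \<open>d \<in> {..n}\<close> by fastforce
    then have "degree (X ^ a * Y ^ b * Z ^ d) < M"
      using degree_monomial_le_weight[OF assms(1-3), of a b d] by linarith
    then show ?thesis
      using False by (simp add: weighted_part_def coeff_eq_0)
  qed
  finally show "coeff ([:P a b d:] * X ^ a * Y ^ b * Z ^ d) M
    = weighted_part u v w M P a b d * coeff X u ^ a * coeff Y v ^ b * coeff Z w ^ d" .
qed

lemma eval3_weighted_part_eq_0: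
  fixes x y y' :: "nat \<Rightarrow> 'a::{idom,ring_char_0}"
  assumes "u \<ge> 1" "v \<ge> 1" "w \<ge> 1"
    and "\<And>a b d. a \<le> n \<Longrightarrow> b \<le> n \<Longrightarrow> d \<le> n \<Longrightarrow> P a b d \<noteq> 0 \<Longrightarrow> a * u + b * v + d * w \<le> M"
    and "\<And>t. eval3 n P (\<Sum>i=1..u. x i * t ^ i) (\<Sum>i=1..v. y i * t ^ i) (\<Sum>i=1..w. y' i * t ^ i) = 0"
  shows "eval3 n (weighted_part u v w M P) (x u) (y v) (y' w) = 0"
proof -
  define series :: "nat \<Rightarrow> (nat \<Rightarrow> 'a) \<Rightarrow> 'a poly" where
    "series k r = (\<Sum>i=1..k. monom (r i) i)" for k r
  have poly_series: "poly (series k r) t = (\<Sum>i=1..k. r i * t ^ i)" for k r t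
    by (simp add: series_def poly_sum poly_monom)
  have degree_series: "degree (series k r) \<le> k" for k r
    unfolding series_def by (intro degree_sum_le) (auto intro: order_trans[OF degree_monom_le])
  have coeff_series: "coeff (series k r) k = r k" if "k \<ge> 1" for k r
    using that by (simp add: series_def coeff_sum)
  define Q where "Q = eval3 n (\<lambda>a b d. [:P a b d:]) (series u x) (series v y) (series w y')"
  have "poly Q t = 0" for t
    using assms(5)[of t] by (simp add: Q_def eval3_def poly_sum poly_series mult.assoc)
  then have "Q = 0"
    using poly_all_0_iff_0 by blast
  then have "coeff Q M = 0"
    by simp
  moreover have "coeff Q M = eval3 n (weighted_part u v w M P)
      (coeff (series u x) u) (coeff (series v y) v) (coeff (series w y') w)"
    unfolding Q_def by (rule coeff_eval3_at_top_weight[OF degree_series degree_series degree_series])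
      (fact assms(4))
  ultimately show ?thesis
    by (simp add: coeff_series[OF assms(1)] coeff_series[OF assms(2)] coeff_series[OF assms(3)])
qed

definition quasimodular_transformation ::
    "(int \<times> int \<times> int \<times> int) set \<Rightarrow> nat \<Rightarrow> (complex \<Rightarrow> complex) \<Rightarrow> nat \<Rightarrow> (nat \<Rightarrow> complex \<Rightarrow> complex) \<Rightarrow> bool"
  where
  "quasimodular_transformation \<Gamma> k f p F \<longleftrightarrow> (\<forall>\<gamma>\<in>\<Gamma>. \<forall>z\<in>upper_half_plane. case \<gamma> of (a, b, c, d) \<Rightarrow>
     (of_int c * z + of_int d) powi (- int k) * f (moebius_act \<gamma> z)
       = (\<Sum>j\<le>p. F j z * (of_int c / (of_int c * z + of_int d)) ^ j))"

lemma quasimodular_transformation_mono: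
  assumes "quasimodular_transformation \<Gamma> k f p F" "p \<le> q"
  shows "quasimodular_transformation \<Gamma> k f q (\<lambda>j z. if j \<le> p then F j z else 0)"
proof -
  have "(\<Sum>j\<le>q. (if j \<le> p then F j z else 0) * x ^ j) = (\<Sum>j\<le>p. F j z * x ^ j)" for z x
  proof -
    have "(\<Sum>j\<le>q. (if j \<le> p then F j z else 0) * x ^ j) = (\<Sum>j\<le>q. if j \<le> p then F j z * x ^ j else 0)"
      by (rule sum.cong) auto
    also have "\<dots> = (\<Sum>j\<in>{j\<in>{..q}. j \<le> p}. F j z * x ^ j)"
      by (subst sum.inter_filter) auto
    also have "{j\<in>{..q}. j \<le> p} = {..p}"
      using assms(2) by auto
    finally show ?thesis .
  qed
  with assms(1) show ?thesis
    unfolding quasimodular_transformation_def by simp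
qed

lemma quasimodular_common_depth:
  assumes "finite I" "\<And>i. i \<in> I \<Longrightarrow> quasimodular \<Gamma> (k i) (f i)"
  shows "\<forall>\<^sub>F q in sequentially. \<exists>F. \<forall>i\<in>I. quasimodular_transformation \<Gamma> (k i) (f i) q (F i)"
proof -
  have "\<forall>i\<in>I. \<exists>p F. quasimodular_transformation \<Gamma> (k i) (f i) p F"
    using assms(2) unfolding quasimodular_def quasimodular_transformation_def by blast
  then obtain P where "\<forall>i\<in>I. \<exists>F. quasimodular_transformation \<Gamma> (k i) (f i) (P i) F"
    by (auto dest: bchoice)
  then obtain F where F: "\<forall>i\<in>I. quasimodular_transformation \<Gamma> (k i) (f i) (P i) (F i)"
    by (auto dest: bchoice)
  have "\<exists>F'. \<forall>i\<in>I. quasimodular_transformation \<Gamma> (k i) (f i) q (F' i)" if "Max (P ` I) \<le> q" for q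
  proof -
    have "P i \<le> q" if "i \<in> I" for i
    proof -
      have "P i \<le> Max (P ` I)"
        using assms(1) that by (simp add: Max_ge)
      then show ?thesis
        using \<open>Max (P ` I) \<le> q\<close> by linarith
    qed
    then show ?thesis
      using F quasimodular_transformation_mono
      by (intro exI[of _ "\<lambda>i j z. if j \<le> P i then F i j z else 0"]) blast
  qed
  then show ?thesis
    unfolding eventually_sequentially by blast
qed

lemma quasimodular_transformation_apply:
  assumes "quasimodular_transformation \<Gamma> k f p F" "(a, b, c, d) \<in> \<Gamma>" "z \<in> upper_half_plane"
    and "of_int c * z + of_int d \<noteq> 0"
  shows "f (moebius_act (a, b, c, d) z)
    = (of_int c * z + of_int d) ^ k * (\<Sum>j\<le>p. F j z * (of_int c / (of_int c * z + of_int d)) ^ j)"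
proof -
  define t where "t = of_int c * z + of_int d"
  have "t powi (- int k) * f (moebius_act (a, b, c, d) z) = (\<Sum>j\<le>p. F j z * (of_int c / t) ^ j)"
    using assms(1-3) unfolding quasimodular_transformation_def t_def by fastforce
  moreover have "t \<noteq> 0"
    using assms(4) by (simp add: t_def)
  ultimately show ?thesis
    unfolding t_def[symmetric] by (simp add: power_int_minus field_simps)
qed

lemma quasimodular_transformation_constant_term:
  assumes "quasimodular_transformation \<Gamma> k f p F" "(1, 0, 0, 1) \<in> \<Gamma>" "z \<in> upper_half_plane"
  shows "F 0 z = f z"
proof -
  have "f z = (\<Sum>j\<le>p. F j z * 0 ^ j)"
    using quasimodular_transformation_apply[OF assms] by (simp add: moebius_act_def)
  also have "\<dots> = F 0 z"
    by (simp add: power_0_left if_distrib sum.If_cases)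
  finally show ?thesis ..
qed

lemma upper_half_plane_notin_Ints: "z \<in> upper_half_plane \<Longrightarrow> z \<notin> \<int>"
  by (auto simp: upper_half_plane_def elim: Ints_cases)

lemma moebius_denominator_nonzero:
  assumes "a * d - b * c = 1" "z \<in> upper_half_plane"
  shows "of_int c * z + of_int d \<noteq> 0"
proof (cases "c = 0")
  case True
  then have "d \<noteq> 0"
    using assms(1) by auto
  with True show ?thesis
    by simp
next
  case False
  then have "Im (of_int c * z + of_int d) \<noteq> 0"
    using assms(2) by (simp add: upper_half_plane_def)
  then show ?thesis
    by (metis zero_complex.sel(2))
qed

lemma moebius_act_upper_half_plane:
  assumes "a * d - b * c = 1" "z \<in> upper_half_plane"
  shows "moebius_act (a, b, c, d) z \<in> upper_half_plane"
proof -
  have "Im (moebius_act (a, b, c, d) z) = Im z / (cmod (of_int c * z + of_int d))\<^sup>2"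
  proof -
    have "Im (of_int a * z + of_int b) * Re (of_int c * z + of_int d)
        - Re (of_int a * z + of_int b) * Im (of_int c * z + of_int d) = of_int (a * d - b * c) * Im z"
      by (simp add: algebra_simps)
    then show ?thesis
      using assms(1) by (simp add: moebius_act_def Im_divide cmod_power2)
  qed
  moreover have "cmod (of_int c * z + of_int d) > 0"
    using moebius_denominator_nonzero[OF assms] by simp
  ultimately show ?thesis
    using assms(2) by (simp add: upper_half_plane_def)
qed

lemma Gamma1_det: "(a, b, c, d) \<in> Gamma1 N \<Longrightarrow> a * d - b * c = 1"
  by (simp add: Gamma1_def)

lemma Gamma1_one: "(1, 0, 0, 1) \<in> Gamma1 N"
  by (simp add: Gamma1_def)

lemma lower_times_translation_in_Gamma1: "(1, k, N * m, 1 + k * (N * m)) \<in> Gamma1 N"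
proof -
  have "(1 + k * (N * m)) mod N = 1 mod N"
    by (metis mod_mult_self2 mult.left_commute)
  then show ?thesis
    by (simp add: Gamma1_def)
qed

(* At (s, t) = (c, cz + d) this is t^p times the sum of the f_i(gamma z): the factor t^p clears
   the denominators (c / (cz + d))^j of the transformation law. *)
definition homogenized_transform ::
    "nat \<Rightarrow> nat \<Rightarrow> (nat \<Rightarrow> nat \<Rightarrow> complex \<Rightarrow> complex) \<Rightarrow> complex \<Rightarrow> complex \<Rightarrow> complex \<Rightarrow> complex" where
  "homogenized_transform u p F z s t = (\<Sum>i=1..u. \<Sum>j\<le>p. F i j z * s ^ j * t ^ (p + i - j))"

lemma homogenized_transform_at_matrix:
  assumes "\<And>i. i \<in> {1..u} \<Longrightarrow> quasimodular_transformation \<Gamma> i (f i) p (F i)"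
    and "(a, b, c, d) \<in> \<Gamma>" "z \<in> upper_half_plane" "of_int c * z + of_int d = t" "t \<noteq> 0"
  shows "homogenized_transform u p F z (of_int c) t = t ^ p * (\<Sum>i=1..u. f i (moebius_act (a, b, c, d) z))"
  unfolding homogenized_transform_def sum_distrib_left
proof (rule sum.cong[OF refl])
  fix i assume i: "i \<in> {1..u}"
  have clear_denominator:
    "t ^ p * (t ^ i * (F i j z * (of_int c / t) ^ j)) = F i j z * of_int c ^ j * t ^ (p + i - j)"
    if "j \<le> p" for j
  proof -
    have "t ^ j * (of_int c / t) ^ j = of_int c ^ j"
      using assms(5) by (simp add: power_divide)
    moreover have "t ^ p = t ^ (p - j) * t ^ j" "t ^ (p + i - j) = t ^ (p - j) * t ^ i"
      using that by (simp_all flip: power_add)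
    ultimately show ?thesis
      by (simp add: mult_ac)
  qed
  have "t ^ p * f i (moebius_act (a, b, c, d) z)
      = (\<Sum>j\<le>p. t ^ p * (t ^ i * (F i j z * (of_int c / t) ^ j)))"
    using quasimodular_transformation_apply[OF assms(1)[OF i] assms(2,3)] assms(4,5)
    by (simp add: sum_distrib_left)
  also have "\<dots> = (\<Sum>j\<le>p. F i j z * of_int c ^ j * t ^ (p + i - j))"
    by (rule sum.cong) (simp_all add: clear_denominator)
  finally show "(\<Sum>j\<le>p. F i j z * of_int c ^ j * t ^ (p + i - j))
      = t ^ p * f i (moebius_act (a, b, c, d) z)"
    by simp
qed

lemma homogenized_transform_at_0:
  assumes "\<And>i. i \<in> {1..u} \<Longrightarrow> F i 0 z = f i z"
  shows "homogenized_transform u p F z 0 t = t ^ p * (\<Sum>i=1..u. f i z * t ^ i)"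
  unfolding homogenized_transform_def sum_distrib_left
proof (rule sum.cong[OF refl])
  fix i assume "i \<in> {1..u}"
  have "(\<Sum>j\<le>p. F i j z * 0 ^ j * t ^ (p + i - j))
      = (\<Sum>j\<le>p. if j = 0 then F i 0 z * t ^ (p + i) else 0)"
    by (rule sum.cong) auto
  then have "(\<Sum>j\<le>p. F i j z * 0 ^ j * t ^ (p + i - j)) = F i 0 z * t ^ (p + i)"
    by simp
  then show "(\<Sum>j\<le>p. F i j z * 0 ^ j * t ^ (p + i - j)) = t ^ p * (f i z * t ^ i)"
    using assms[OF \<open>i \<in> {1..u}\<close>] by (simp add: power_add)
qed

definition homogenized_eval3 ::
    "nat \<Rightarrow> (nat \<Rightarrow> nat \<Rightarrow> nat \<Rightarrow> 'a::comm_semiring_1) \<Rightarrow> nat \<Rightarrow> 'a \<Rightarrow> 'a \<Rightarrow> 'a \<Rightarrow> 'a \<Rightarrow> 'a" where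
  "homogenized_eval3 n P p x y z t
    = (\<Sum>a\<le>n. \<Sum>b\<le>n. \<Sum>d\<le>n. P a b d * x ^ a * y ^ b * z ^ d * t ^ (p * (3 * n - (a + b + d))))"

lemma homogenized_eval3_mult_power:
  "homogenized_eval3 n P p (t ^ p * x) (t ^ p * y) (t ^ p * z) t = t ^ (p * (3 * n)) * eval3 n P x y z"
  unfolding homogenized_eval3_def eval3_def sum_distrib_left
proof (intro sum.cong refl)
  fix a b d assume "a \<in> {..n}" "b \<in> {..n}" "d \<in> {..n}"
  then have "p * (3 * n) = p * a + p * b + p * d + p * (3 * n - (a + b + d))"
    by (simp flip: add_mult_distrib2)
  then show "P a b d * (t ^ p * x) ^ a * (t ^ p * y) ^ b * (t ^ p * z) ^ d * t ^ (p * (3 * n - (a + b + d)))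
    = t ^ (p * (3 * n)) * (P a b d * x ^ a * y ^ b * z ^ d)"
    by (simp add: power_mult_distrib power_add mult_ac flip: power_mult)
qed

lemma homogenized_eval3_at_matrix:
  assumes "\<And>i. i \<in> {1..u} \<Longrightarrow> quasimodular_transformation \<Gamma> i (fs i) p (F i)"
    and "\<And>i. i \<in> {1..v} \<Longrightarrow> quasimodular_transformation \<Gamma> i (gs i) p (G i)"
    and "\<And>i. i \<in> {1..w} \<Longrightarrow> quasimodular_transformation \<Gamma> i (hs i) p (H i)"
    and "(a, b, c, d) \<in> \<Gamma>" "z \<in> upper_half_plane" "of_int c * z + of_int d = t" "t \<noteq> 0"
  shows "homogenized_eval3 n P p (homogenized_transform u p F z (of_int c) t)
      (homogenized_transform v p G z (of_int c) t) (homogenized_transform w p H z (of_int c) t) t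
    = t ^ (p * (3 * n)) * eval3 n P (\<Sum>i=1..u. fs i (moebius_act (a, b, c, d) z))
      (\<Sum>i=1..v. gs i (moebius_act (a, b, c, d) z)) (\<Sum>i=1..w. hs i (moebius_act (a, b, c, d) z))"
  using homogenized_transform_at_matrix[OF assms(1) assms(4-)]
    homogenized_transform_at_matrix[OF assms(2) assms(4-)]
    homogenized_transform_at_matrix[OF assms(3) assms(4-)]
  by (simp only: homogenized_eval3_mult_power)

lemma homogenized_eval3_at_0:
  assumes "\<And>i. i \<in> {1..u} \<Longrightarrow> quasimodular_transformation \<Gamma> i (fs i) p (F i)"
    and "\<And>i. i \<in> {1..v} \<Longrightarrow> quasimodular_transformation \<Gamma> i (gs i) p (G i)"
    and "\<And>i. i \<in> {1..w} \<Longrightarrow> quasimodular_transformation \<Gamma> i (hs i) p (H i)"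
    and "(1, 0, 0, 1) \<in> \<Gamma>" "z \<in> upper_half_plane"
  shows "homogenized_eval3 n P p (homogenized_transform u p F z 0 t)
      (homogenized_transform v p G z 0 t) (homogenized_transform w p H z 0 t) t
    = t ^ (p * (3 * n)) * eval3 n P (\<Sum>i=1..u. fs i z * t ^ i) (\<Sum>i=1..v. gs i z * t ^ i)
      (\<Sum>i=1..w. hs i z * t ^ i)"
proof -
  note constant_term = quasimodular_transformation_constant_term[OF _ assms(4,5)]
  have "homogenized_transform u p F z 0 t = t ^ p * (\<Sum>i=1..u. fs i z * t ^ i)"
    using constant_term[OF assms(1)] by (rule homogenized_transform_at_0)
  moreover have "homogenized_transform v p G z 0 t = t ^ p * (\<Sum>i=1..v. gs i z * t ^ i)"
    using constant_term[OF assms(2)] by (rule homogenized_transform_at_0)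
  moreover have "homogenized_transform w p H z 0 t = t ^ p * (\<Sum>i=1..w. hs i z * t ^ i)"
    using constant_term[OF assms(3)] by (rule homogenized_transform_at_0)
  ultimately show ?thesis
    by (simp only: homogenized_eval3_mult_power)
qed

lemma homogenized_eval3_eq_0_on_Gamma1_lines:
  assumes "\<And>i. i \<in> {1..u} \<Longrightarrow> quasimodular_transformation (Gamma1 N) i (fs i) p (F i)"
    and "\<And>i. i \<in> {1..v} \<Longrightarrow> quasimodular_transformation (Gamma1 N) i (gs i) p (G i)"
    and "\<And>i. i \<in> {1..w} \<Longrightarrow> quasimodular_transformation (Gamma1 N) i (hs i) p (H i)"
    and dep: "\<And>z. z \<in> upper_half_plane \<Longrightarrow>
      eval3 n P (\<Sum>i=1..u. fs i z) (\<Sum>i=1..v. gs i z) (\<Sum>i=1..w. hs i z) = 0"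
    and z: "z \<in> upper_half_plane" and \<tau>: "of_int (N * m) * (z + of_int k) + 1 = \<tau>"
  shows "homogenized_eval3 n P p (homogenized_transform u p F z (of_int (N * m)) \<tau>)
    (homogenized_transform v p G z (of_int (N * m)) \<tau>) (homogenized_transform w p H z (of_int (N * m)) \<tau>) \<tau> = 0"
proof -
  define \<gamma> :: "int \<times> int \<times> int \<times> int" where "\<gamma> = (1, k, N * m, 1 + k * (N * m))"
  have \<gamma>_in: "(1, k, N * m, 1 + k * (N * m)) \<in> Gamma1 N"
    by (rule lower_times_translation_in_Gamma1)
  have den: "of_int (N * m) * z + of_int (1 + k * (N * m)) = \<tau>"
    using \<tau> by (simp add: algebra_simps)
  have "\<tau> \<noteq> 0"
    using moebius_denominator_nonzero[OF Gamma1_det[OF \<gamma>_in] z] unfolding den .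
  have "homogenized_eval3 n P p (homogenized_transform u p F z (of_int (N * m)) \<tau>)
      (homogenized_transform v p G z (of_int (N * m)) \<tau>) (homogenized_transform w p H z (of_int (N * m)) \<tau>) \<tau>
    = \<tau> ^ (p * (3 * n)) * eval3 n P (\<Sum>i=1..u. fs i (moebius_act \<gamma> z))
      (\<Sum>i=1..v. gs i (moebius_act \<gamma> z)) (\<Sum>i=1..w. hs i (moebius_act \<gamma> z))"
    unfolding \<gamma>_def using assms(1-3) \<gamma>_in z den \<open>\<tau> \<noteq> 0\<close> by (rule homogenized_eval3_at_matrix)
  also have "\<dots> = 0"
    using dep[OF moebius_act_upper_half_plane[OF Gamma1_det[OF \<gamma>_in] z]] by (simp add: \<gamma>_def)
  finally show ?thesis .
qed

lemma eval3_deformation_eq_0: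
  fixes fs gs hs :: "nat \<Rightarrow> complex \<Rightarrow> complex"
  assumes "N \<noteq> 0"
    and F: "\<And>i. i \<in> {1..u} \<Longrightarrow> quasimodular_transformation (Gamma1 N) i (fs i) p (F i)"
    and G: "\<And>i. i \<in> {1..v} \<Longrightarrow> quasimodular_transformation (Gamma1 N) i (gs i) p (G i)"
    and H: "\<And>i. i \<in> {1..w} \<Longrightarrow> quasimodular_transformation (Gamma1 N) i (hs i) p (H i)"
    and dep: "\<And>z. z \<in> upper_half_plane \<Longrightarrow>
      eval3 n P (\<Sum>i=1..u. fs i z) (\<Sum>i=1..v. gs i z) (\<Sum>i=1..w. hs i z) = 0"
    and z: "z \<in> upper_half_plane"
  shows "eval3 n P (\<Sum>i=1..u. fs i z * t ^ i) (\<Sum>i=1..v. gs i z * t ^ i) (\<Sum>i=1..w. hs i z * t ^ i) = 0"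
proof -
  define \<Phi> where "\<Phi> s t = homogenized_eval3 n P p (homogenized_transform u p F z s t)
    (homogenized_transform v p G z s t) (homogenized_transform w p H z s t) t" for s t
  have "poly_fun2 \<Phi>"
    unfolding poly_fun2_def \<Phi>_def homogenized_eval3_def homogenized_transform_def
    by (intro allI impI poly_fun_sum poly_fun_mult poly_fun_power poly_fun_const)
  moreover note upper_half_plane_notin_Ints[OF z]
  moreover have "infinite (range (\<lambda>m. of_int (N * int m) :: complex))"
    using \<open>N \<noteq> 0\<close> by (intro range_inj_infinite injI) simp
  moreover have "\<Phi> s (s * (z + of_int k) + 1) = 0"
    if "s \<in> range (\<lambda>m. of_int (N * int m))" for s k
    using that homogenized_eval3_eq_0_on_Gamma1_lines[OF F G H dep z refl] unfolding \<Phi>_def by blast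
  ultimately have on_axis: "\<Phi> 0 t = 0" for t
    by (rule poly_fun2_eq_0_on_axis)
  have at_0: "\<Phi> 0 t = t ^ (p * (3 * n)) * eval3 n P (\<Sum>i=1..u. fs i z * t ^ i)
      (\<Sum>i=1..v. gs i z * t ^ i) (\<Sum>i=1..w. hs i z * t ^ i)" for t
    unfolding \<Phi>_def using F G H Gamma1_one z by (rule homogenized_eval3_at_0)
  have "eval3 n P (\<Sum>i=1..u. fs i z * t ^ i) (\<Sum>i=1..v. gs i z * t ^ i)
      (\<Sum>i=1..w. hs i z * t ^ i) = 0" if "t \<noteq> 0" for t
    using on_axis[of t] at_0[of t] that by simp
  moreover have "poly_fun (\<lambda>t. eval3 n P (\<Sum>i=1..u. fs i z * t ^ i) (\<Sum>i=1..v. gs i z * t ^ i)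
      (\<Sum>i=1..w. hs i z * t ^ i))"
    unfolding eval3_def by (intro poly_fun_sum poly_fun_mult poly_fun_power poly_fun_const poly_fun_id)
  ultimately show ?thesis
    using poly_fun_eq_0_if_eq_0_off_point[where a = 0] by blast
qed

theorem lemma5p4:
  fixes N :: int and u v w :: nat
    and fs gs hs :: "nat \<Rightarrow> complex \<Rightarrow> complex"
  assumes "N \<ge> 1"
    and "\<And>i. i \<ge> 1 \<Longrightarrow> quasimodular (Gamma1 N) i (fs i)"
    and "\<And>i. i \<ge> 1 \<Longrightarrow> quasimodular (Gamma1 N) i (gs i)"
    and "\<And>i. i \<ge> 1 \<Longrightarrow> quasimodular (Gamma1 N) i (hs i)"
    and "u \<ge> 1" and "v \<ge> 1" and "w \<ge> 1"
    and "alg_dependent3 (\<lambda>z. \<Sum>i=1..u. fs i z) (\<lambda>z. \<Sum>i=1..v. gs i z) (\<lambda>z. \<Sum>i=1..w. hs i z)"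
  shows "alg_dependent3 (fs u) (gs v) (hs w)"
proof -
  obtain n P where nonzero: "\<exists>a\<le>n. \<exists>b\<le>n. \<exists>d\<le>n. P a b d \<noteq> 0"
    and dep: "\<And>z. z \<in> upper_half_plane \<Longrightarrow>
      eval3 n P (\<Sum>i=1..u. fs i z) (\<Sum>i=1..v. gs i z) (\<Sum>i=1..w. hs i z) = 0"
    using assms(8) unfolding alg_dependent3_eval3 by blast
  obtain M where top: "\<And>a b d. a \<le> n \<Longrightarrow> b \<le> n \<Longrightarrow> d \<le> n \<Longrightarrow> P a b d \<noteq> 0 \<Longrightarrow> a * u + b * v + d * w \<le> M"
    and top_nonzero: "\<exists>a\<le>n. \<exists>b\<le>n. \<exists>d\<le>n. weighted_part u v w M P a b d \<noteq> 0"
    using obtain_top_weight[OF nonzero] by blast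
  have "\<forall>\<^sub>F q in sequentially.
      (\<exists>F. \<forall>i\<in>{1..u}. quasimodular_transformation (Gamma1 N) i (fs i) q (F i)) \<and>
      (\<exists>G. \<forall>i\<in>{1..v}. quasimodular_transformation (Gamma1 N) i (gs i) q (G i)) \<and>
      (\<exists>H. \<forall>i\<in>{1..w}. quasimodular_transformation (Gamma1 N) i (hs i) q (H i))"
    using assms(2-4) by (intro eventually_conj quasimodular_common_depth[where k = "\<lambda>i. i"]) auto
  then obtain p F G H where
    F: "\<And>i. i \<in> {1..u} \<Longrightarrow> quasimodular_transformation (Gamma1 N) i (fs i) p (F i)" and
    G: "\<And>i. i \<in> {1..v} \<Longrightarrow> quasimodular_transformation (Gamma1 N) i (gs i) p (G i)" and
    H: "\<And>i. i \<in> {1..w} \<Longrightarrow> quasimodular_transformation (Gamma1 N) i (hs i) p (H i)"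
    unfolding eventually_sequentially by blast
  have "N \<noteq> 0"
    using assms(1) by simp
  show ?thesis
    unfolding alg_dependent3_eval3
  proof (rule exI[of _ n], rule exI[of _ "weighted_part u v w M P"], intro conjI ballI)
    show "\<exists>a\<le>n. \<exists>b\<le>n. \<exists>d\<le>n. weighted_part u v w M P a b d \<noteq> 0"
      by (fact top_nonzero)
    fix z assume "z \<in> upper_half_plane"
    show "eval3 n (weighted_part u v w M P) (fs u z) (gs v z) (hs w z) = 0"
    proof (rule eval3_weighted_part_eq_0[OF assms(5-7) top])
      show "eval3 n P (\<Sum>i=1..u. fs i z * t ^ i) (\<Sum>i=1..v. gs i z * t ^ i) (\<Sum>i=1..w. hs i z * t ^ i) = 0" for t
        using \<open>N \<noteq> 0\<close> F G H dep \<open>z \<in> upper_half_plane\<close> by (rule eval3_deformation_eq_0)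
    qed
  qed
qed

end
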